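(* Let $\Sigma:\ \dot x=-(A-M)x+d$ be $\gamma$-robust for some $\gamma>0$ and let $u=(A-M)^{-1}\mathbb{1}$. Let $i\neq k$ with $(M)_{ik}=0$ and $m_{ik}>0$, and suppose $-(A-M-m_{ik}e_ie_k^{\mathrm T})$ is Hurwitz. Then $\bar u=(A-M-m_{ik}e_ie_k^{\mathrm T})^{-1}\mathbb{1}$ satisfies $$\bar u_i\ \ge\ u_i+\frac{m_{ik}}{a_i}u_k.$$
   Context: $A=\mathrm{diag}(a_1,\dots,a_N)$ with all $a_i>0$, $M\in\mathbb{R}^{N\times N}$ has zero diagonal and nonnegative off-diagonal entries; $e_i$ is the $i$th standard basis vector and $\mathbb{1}$ the all-ones vector. For $\gamma>0$, a system $\dot x=-(A-M)x+d$ is $\gamma$-robust if $-(A-M)$ is Hurwitz and for every bounded disturbance $d$, the solution with $x(0)=0$ satisfies $\max_{p}|x_p(t)|\le\gamma\max_p\sup_{s\ge0}|d_p(s)|$ for all $t\ge0$. *)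

theory Defs
  imports "HOL-Analysis.Analysis"
begin

definition hurwitz :: "real^'n^'n \<Rightarrow> bool" where
  "hurwitz B \<longleftrightarrow>
     (\<forall>(c::complex) (v::complex^'n). v \<noteq> 0 \<and> (map_matrix complex_of_real B) *v v = c *s v
        \<longrightarrow> Re c < 0)"

definition diag_mat :: "('n \<Rightarrow> real) \<Rightarrow> real^'n^'n" where
  "diag_mat a = (\<chi> i j. if i = j then a i else 0)"

definition elem_mat :: "'n \<Rightarrow> 'n \<Rightarrow> real \<Rightarrow> real^'n^'n" where
  "elem_mat i k m = (\<chi> p q. if p = i \<and> q = k then m else 0)"

definition is_solution :: "real^'n^'n \<Rightarrow> (real \<Rightarrow> real^'n) \<Rightarrow> (real \<Rightarrow> real^'n) \<Rightarrow> bool" where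
  "is_solution B d x \<longleftrightarrow> x 0 = 0 \<and>
     (\<forall>t\<ge>0. (x has_vector_derivative (B *v x t + d t)) (at t within {0..}))"

definition gamma_robust :: "real \<Rightarrow> real^'n^'n \<Rightarrow> real^'n^'n \<Rightarrow> bool" where
  "gamma_robust \<gamma> A M \<longleftrightarrow> hurwitz (-(A - M)) \<and>
     (\<forall>d x. continuous_on {0..} d \<and> bounded (d ` {0..}) \<and> is_solution (-(A - M)) d x \<longrightarrow>
        (\<forall>t\<ge>0. \<forall>p. \<bar>x t $ p\<bar> \<le> \<gamma> * (MAX q. (SUP s\<in>{0..}. \<bar>d s $ q\<bar>))))"

end

theory Submission
  imports Defs
begin

text \<open>B = A - M is a Z-matrix (nonpositive off-diagonal entries) and so is
  B' = B - m e_i e_k^T; with -B and -B' Hurwitz both are inverse positive, i.e. B y \<ge> 0 implies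
  y \<ge> 0 (a Perron-Frobenius argument via Brouwer's fixed point theorem). Hence ubar_k \<ge> 0, and
  d = ubar - u solves B d = m ubar_k e_i \<ge> 0, so d \<ge> 0. Row i of this equation reads
  a_i d_i = m (u_k + d_k) + \<Sum>_l M_il d_l \<ge> m u_k.\<close>

lemma nonneg_matrix_mult_nonneg:
  fixes P :: "real^'n::finite^'m"
  assumes "\<And>p q. 0 \<le> P$p$q" and "\<And>j. 0 \<le> x$j"
  shows "0 \<le> (P *v x)$j"
  unfolding matrix_vector_mult_def using assms by (simp add: sum_nonneg)

definition collatz_wielandt_set :: "real^'n^'n \<Rightarrow> real \<Rightarrow> (real^'n) set" where
  "collatz_wielandt_set P s =
     {x. (\<forall>j. 0 \<le> x$j) \<and> (\<Sum>j\<in>UNIV. x$j) = 1 \<and> (\<forall>j. s * x$j \<le> (P *v x)$j)}"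

lemma compact_collatz_wielandt_set: "compact (collatz_wielandt_set (P::real^'n::finite^'n) s)"
proof -
  have "closed (collatz_wielandt_set P s)"
    unfolding collatz_wielandt_set_def Collect_conj_eq
    by (intro closed_Int closed_Collect_all closed_Collect_le closed_Collect_eq continuous_intros
          linear_continuous_on matrix_vector_mul_linear)
  moreover have "norm x \<le> 1" if "x \<in> collatz_wielandt_set P s" for x
    using norm_le_l1_cart[of x] that by (simp add: collatz_wielandt_set_def)
  then have "bounded (collatz_wielandt_set P s)"
    unfolding bounded_iff by blast
  ultimately show ?thesis by (simp add: compact_eq_bounded_closed)
qed

lemma convex_collatz_wielandt_set: "convex (collatz_wielandt_set (P::real^'n::finite^'n) s)"
  unfolding convex_def
proof (intro allI impI ballI)
  fix x y and u v :: real
  assume x: "x \<in> collatz_wielandt_set P s" and y: "y \<in> collatz_wielandt_set P s"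
    and uv: "0 \<le> u" "0 \<le> v" "u + v = 1"
  have "(\<Sum>j\<in>UNIV. (u *\<^sub>R x + v *\<^sub>R y)$j) = u * (\<Sum>j\<in>UNIV. x$j) + v * (\<Sum>j\<in>UNIV. y$j)"
    by (simp add: sum.distrib sum_distrib_left)
  moreover have "s * (u *\<^sub>R x + v *\<^sub>R y)$j \<le> (P *v (u *\<^sub>R x + v *\<^sub>R y))$j" for j
  proof -
    have "u * (s * x$j) \<le> u * (P *v x)$j" "v * (s * y$j) \<le> v * (P *v y)$j"
      using x y uv by (auto simp: collatz_wielandt_set_def intro!: mult_left_mono)
    then show ?thesis
      by (simp add: matrix_vector_right_distrib matrix_vector_mult_scaleR distrib_left mult.left_commute[of s])
  qed
  ultimately show "u *\<^sub>R x + v *\<^sub>R y \<in> collatz_wielandt_set P s"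
    using x y uv by (auto simp: collatz_wielandt_set_def)
qed

lemma collatz_wielandt_set_row_sum_ge:
  assumes "x \<in> collatz_wielandt_set P s"
  shows "s \<le> (\<Sum>j\<in>UNIV. (P *v x)$j)"
proof -
  have "s = (\<Sum>j\<in>UNIV. s * x$j)"
    using assms by (simp add: collatz_wielandt_set_def sum_distrib_left[symmetric])
  also have "\<dots> \<le> (\<Sum>j\<in>UNIV. (P *v x)$j)"
    using assms by (intro sum_mono) (auto simp: collatz_wielandt_set_def)
  finally show ?thesis .
qed

lemma normalized_mem_collatz_wielandt_set:
  fixes w :: "real^'n::finite"
  assumes w_nonneg: "\<And>j. 0 \<le> w$j" and "w \<noteq> 0" and "\<And>j. s * w$j \<le> (P *v w)$j"
  shows "(1 / (\<Sum>j\<in>UNIV. w$j)) *\<^sub>R w \<in> collatz_wielandt_set P s"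
proof -
  obtain j where "w$j \<noteq> 0" using \<open>w \<noteq> 0\<close> by (metis vec_eq_iff zero_index)
  then have "0 < (\<Sum>j\<in>UNIV. w$j)"
    using w_nonneg by (intro sum_pos2[of UNIV j]) (auto simp: order_less_le)
  then show ?thesis
    using assms by (auto simp: collatz_wielandt_set_def matrix_vector_mult_scaleR
        sum_divide_distrib[symmetric] divide_right_mono)
qed

lemma normalized_image_mem_collatz_wielandt_set:
  fixes P :: "real^'n::finite^'n"
  assumes P_nonneg: "\<And>p q. 0 \<le> P$p$q" and "0 < s" and x: "x \<in> collatz_wielandt_set P s"
  shows "(1 / (\<Sum>j\<in>UNIV. (P *v x)$j)) *\<^sub>R (P *v x) \<in> collatz_wielandt_set P s"
proof (rule normalized_mem_collatz_wielandt_set)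
  have x_nonneg: "\<And>q. 0 \<le> x$q" using x by (simp add: collatz_wielandt_set_def)
  then show "0 \<le> (P *v x)$j" for j by (rule nonneg_matrix_mult_nonneg[OF P_nonneg])
  show "P *v x \<noteq> 0"
    using collatz_wielandt_set_row_sum_ge[OF x] \<open>0 < s\<close> by auto
  have "0 \<le> (P *v (P *v x - s *\<^sub>R x))$j" for j
    using x by (intro nonneg_matrix_mult_nonneg[OF P_nonneg]) (auto simp: collatz_wielandt_set_def)
  then show "s * (P *v x)$j \<le> (P *v (P *v x))$j" for j
    by (simp add: matrix_vector_mult_diff_distrib matrix_vector_mult_scaleR)
qed

text \<open>Brouwer's theorem applied to x \<mapsto> P x / \<Sum>(P x) on the Collatz-Wielandt set.\<close>
lemma nonneg_matrix_eigenvector_ge: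
  fixes P :: "real^'n::finite^'n"
  assumes P_nonneg: "\<And>p q. 0 \<le> P$p$q" and s_pos: "0 < s"
    and "\<And>j. 0 \<le> w$j" and "w \<noteq> 0" and "\<And>j. s * w$j \<le> (P *v w)$j"
  obtains x \<sigma> where "\<And>j. 0 \<le> x$j" "x \<noteq> 0" "P *v x = \<sigma> *s x" "s \<le> \<sigma>"
proof -
  define K where "K = collatz_wielandt_set P s"
  define \<sigma> where "\<sigma> x = (\<Sum>j\<in>UNIV. (P *v x)$j)" for x
  define f where "f x = (1 / \<sigma> x) *\<^sub>R (P *v x)" for x
  have \<sigma>_ge: "s \<le> \<sigma> x" if "x \<in> K" for x
    using that unfolding K_def \<sigma>_def by (rule collatz_wielandt_set_row_sum_ge)
  have "K \<noteq> {}"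
    using normalized_mem_collatz_wielandt_set[OF assms(3-5)] unfolding K_def by blast
  moreover have "continuous_on K f"
    unfolding f_def \<sigma>_def
    by (intro continuous_intros linear_continuous_on matrix_vector_mul_linear)
      (use \<sigma>_ge s_pos in \<open>fastforce simp: \<sigma>_def\<close>)
  moreover have "f \<in> K \<rightarrow> K"
    using normalized_image_mem_collatz_wielandt_set[OF P_nonneg s_pos]
    unfolding K_def f_def \<sigma>_def by blast
  ultimately obtain x where x: "x \<in> K" and fx: "f x = x"
    using brouwer[OF compact_collatz_wielandt_set[of P s, folded K_def]
        convex_collatz_wielandt_set[of P s, folded K_def]] by blast
  have "\<sigma> x *\<^sub>R f x = P *v x" using \<sigma>_ge[OF x] s_pos by (simp add: f_def)
  then have "P *v x = \<sigma> x *s x" using fx by (simp add: scalar_mult_eq_scaleR)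
  moreover have "x \<noteq> 0" using x by (auto simp: K_def collatz_wielandt_set_def)
  ultimately show ?thesis
    using that x \<sigma>_ge[OF x] by (auto simp: K_def collatz_wielandt_set_def)
qed

lemma hurwitz_neg_real_eigenvalue_pos:
  fixes B :: "real^'n::finite^'n"
  assumes "hurwitz (-B)" and "x \<noteq> 0" and "B *v x = \<mu> *s x"
  shows "0 < \<mu>"
proof -
  define v :: "complex^'n" where "v = (\<chi> j. complex_of_real (x$j))"
  have "v \<noteq> 0"
    using \<open>x \<noteq> 0\<close> unfolding v_def by (metis vec_eq_iff vec_lambda_beta zero_index of_real_eq_0_iff)
  moreover have "map_matrix complex_of_real (-B) *v v = complex_of_real (-\<mu>) *s v"
  proof -
    have "(map_matrix complex_of_real (-B) *v v) $ p = complex_of_real (- (B *v x) $ p)" for p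
      by (simp add: matrix_vector_mult_def v_def sum_negf[symmetric])
    then show ?thesis using assms(3) by (simp add: v_def vec_eq_iff)
  qed
  ultimately have "Re (complex_of_real (-\<mu>)) < 0"
    using assms(1) unfolding hurwitz_def by blast
  then show ?thesis by simp
qed

definition Z_matrix :: "real^'n^'n \<Rightarrow> bool" where
  "Z_matrix B \<longleftrightarrow> (\<forall>p q. p \<noteq> q \<longrightarrow> B$p$q \<le> 0)"

lemma Z_matrix_mult_neg_part_nonpos:
  fixes B :: "real^'n::finite^'n"
  assumes Z: "Z_matrix B" and By: "\<And>j. 0 \<le> (B *v y)$j"
  shows "(B *v (\<chi> l. max 0 (- y$l)))$p \<le> 0"
proof -
  define w where "w = (\<chi> l. max 0 (- y$l))"
  have off_diag: "B$p$l * w$l \<le> - (B$p$l * y$l)" "B$p$l * w$l \<le> 0" if "l \<noteq> p" for l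
  proof -
    have "B$p$l \<le> 0" using Z that by (simp add: Z_matrix_def)
    then show "B$p$l * w$l \<le> - (B$p$l * y$l)" "B$p$l * w$l \<le> 0"
      by (auto simp: w_def max_def mult_le_0_iff)
  qed
  show ?thesis
  proof (cases "y$p < 0")
    case True
    have "B$p$l * w$l \<le> - (B$p$l * y$l)" for l
      using True off_diag(1)[of l] by (cases "l = p") (simp_all add: w_def)
    then have "(B *v w)$p \<le> (\<Sum>l\<in>UNIV. - (B$p$l * y$l))"
      unfolding matrix_vector_mult_def vec_lambda_beta by (rule sum_mono)
    also have "\<dots> = - (B *v y)$p" by (simp add: matrix_vector_mult_def sum_negf)
    finally show ?thesis using By[of p] unfolding w_def by simp
  next
    case False
    have "B$p$l * w$l \<le> 0" for l
      using False off_diag(2)[of l] by (cases "l = p") (simp_all add: w_def)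
    then have "(B *v w)$p \<le> (\<Sum>l\<in>(UNIV::'n set). 0)"
      unfolding matrix_vector_mult_def vec_lambda_beta by (rule sum_mono)
    then show ?thesis unfolding w_def by simp
  qed
qed

text \<open>If y had a negative entry, its negative part w would satisfy (sI - B) w \<ge> s w for a shift s
  making sI - B nonnegative, and the resulting nonnegative eigenvector of B would have eigenvalue
  \<le> 0, contradicting the Hurwitz property.\<close>
lemma Z_matrix_hurwitz_nonneg:
  fixes B :: "real^'n::finite^'n"
  assumes Z: "Z_matrix B" and hurw: "hurwitz (-B)" and By: "\<And>j. 0 \<le> (B *v y)$j"
  shows "0 \<le> y$j"
proof (rule ccontr)
  assume "\<not> 0 \<le> y$j"
  define w where "w = (\<chi> l. max 0 (- y$l))"
  have w_nonneg: "\<And>l. 0 \<le> w$l" and "w$j \<noteq> 0"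
    using \<open>\<not> 0 \<le> y$j\<close> by (auto simp: w_def)
  then have "w \<noteq> 0" by auto
  define s where "s = 1 + (\<Sum>q\<in>UNIV. \<bar>B$q$q\<bar>)"
  have "\<bar>B$q$q\<bar> \<le> (\<Sum>q\<in>UNIV. \<bar>B$q$q\<bar>)" for q
    by (rule member_le_sum) auto
  then have diag_le: "B$q$q \<le> s" for q
    unfolding s_def by (smt (verit))
  have s_pos: "0 < s"
    unfolding s_def by (simp add: sum_nonneg add_pos_nonneg)
  define P where "P = s *\<^sub>R mat 1 - B"
  have P_nonneg: "0 \<le> P$p$q" for p q
    using diag_le[of p] Z by (auto simp: P_def mat_def Z_matrix_def)
  have P_mult: "P *v x = s *\<^sub>R x - B *v x" for x
    by (simp add: P_def matrix_vector_mult_diff_rdistrib flip: scaleR_matrix_vector_assoc)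
  have "s * w$l \<le> (P *v w)$l" for l
    using Z_matrix_mult_neg_part_nonpos[OF Z By, of l] by (simp add: P_mult w_def)
  then obtain x \<sigma> where "x \<noteq> 0" "P *v x = \<sigma> *s x" "s \<le> \<sigma>"
    using nonneg_matrix_eigenvector_ge[OF P_nonneg s_pos w_nonneg \<open>w \<noteq> 0\<close>] by metis
  then have "B *v x = (s - \<sigma>) *s x"
    by (simp add: P_mult vec_eq_iff algebra_simps)
  then have "0 < s - \<sigma>"
    by (rule hurwitz_neg_real_eigenvalue_pos[OF hurw \<open>x \<noteq> 0\<close>])
  with \<open>s \<le> \<sigma>\<close> show False by simp
qed

lemma Z_matrix_hurwitz_invertible:
  fixes B :: "real^'n::finite^'n"
  assumes Z: "Z_matrix B" and hurw: "hurwitz (-B)"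
  shows "invertible B"
proof -
  have "x = y" if "B *v x = B *v y" for x y
  proof -
    have "B *v (x - y) = 0" "B *v (y - x) = 0"
      using that by (simp_all add: matrix_vector_mult_diff_distrib)
    moreover have "0 \<le> z$j" if "B *v z = 0" for z j
      by (rule Z_matrix_hurwitz_nonneg[OF Z hurw]) (simp add: that)
    ultimately have "0 \<le> (x - y)$j" "0 \<le> (y - x)$j" for j
      by blast+
    then show ?thesis by (metis vec_eq_iff order_antisym diff_ge_0_iff_ge vector_minus_component)
  qed
  then have "inj ((*v) B)" by (rule injI)
  then show ?thesis using matrix_left_invertible_injective invertible_left_inverse by blast
qed

lemma invertible_mult_matrix_inv:
  fixes A :: "real^'n^'n"
  assumes "invertible A"
  shows "A *v (matrix_inv A *v v) = v"
proof -
  have "A ** matrix_inv A = mat 1 \<and> matrix_inv A ** A = mat 1"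
    unfolding matrix_inv_def using assms unfolding invertible_def by (rule someI_ex)
  then show ?thesis by (metis matrix_vector_mul_assoc matrix_vector_mul_lid)
qed

lemma Z_matrix_minus_nonneg:
  assumes "Z_matrix B" and "\<And>p q. 0 \<le> E$p$q"
  shows "Z_matrix (B - E)"
  using assms by (simp add: Z_matrix_def) (smt (verit))

lemma Z_matrix_diag_minus_nonneg:
  assumes "\<And>p q. 0 \<le> M$p$q"
  shows "Z_matrix (diag_mat a - M)"
  using assms by (simp add: Z_matrix_def diag_mat_def)

lemma elem_mat_mult_vec: "elem_mat i k m *v x = (\<chi> p. if p = i then m * x$k else 0)"
  by (simp add: vec_eq_iff matrix_vector_mult_def elem_mat_def if_distrib[of "\<lambda>c. c * _"]
      sum.delta' cong: if_cong)

lemma diag_mat_minus_mult_vec: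
  "((diag_mat a - M) *v x)$p = a p * x$p - (\<Sum>l\<in>UNIV. M$p$l * x$l)"
  by (simp add: matrix_vector_mult_def diag_mat_def sum_subtractf left_diff_distrib
      if_distrib[of "\<lambda>c. c * _"] sum.delta cong: if_cong)

theorem mainTheorem10:
  fixes a :: "'n::finite \<Rightarrow> real" and M :: "real^'n^'n" and \<gamma> m :: real and i k :: 'n
  assumes a_pos: "\<And>p. a p > 0"
    and M_diag: "\<And>p. M $ p $ p = 0"
    and M_nonneg: "\<And>p q. M $ p $ q \<ge> 0"
    and gamma_pos: "\<gamma> > 0"
    and robust: "gamma_robust \<gamma> (diag_mat a) M"
    and ik: "i \<noteq> k" and Mik: "M $ i $ k = 0" and m_pos: "m > 0"
    and hurw: "hurwitz (-(diag_mat a - M - elem_mat i k m))"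
  shows "let u = matrix_inv (diag_mat a - M) *v (\<chi> p. 1);
             ubar = matrix_inv (diag_mat a - M - elem_mat i k m) *v (\<chi> p. 1)
         in ubar $ i \<ge> u $ i + m / a i * u $ k"
proof -
  define B where "B = diag_mat a - M"
  define B' where "B' = B - elem_mat i k m"
  define u where "u = matrix_inv B *v (\<chi> p. 1)"
  define ubar where "ubar = matrix_inv B' *v (\<chi> p. 1)"
  have ZB: "Z_matrix B" unfolding B_def using M_nonneg by (rule Z_matrix_diag_minus_nonneg)
  have ZB': "Z_matrix B'"
    unfolding B'_def using m_pos by (intro Z_matrix_minus_nonneg[OF ZB]) (simp add: elem_mat_def)
  have hB: "hurwitz (-B)" using robust by (simp add: gamma_robust_def B_def)
  have hB': "hurwitz (-B')" using hurw by (simp add: B'_def B_def)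
  have Bu: "B *v u = (\<chi> p. 1)" and B'ubar: "B' *v ubar = (\<chi> p. 1)"
    unfolding u_def ubar_def
    by (simp_all add: invertible_mult_matrix_inv Z_matrix_hurwitz_invertible ZB hB ZB' hB')
  have "0 \<le> ubar$k" by (rule Z_matrix_hurwitz_nonneg[OF ZB' hB']) (simp add: B'ubar)
  define d where "d = ubar - u"
  have Bd: "B *v d = (\<chi> p. if p = i then m * ubar$k else 0)"
    using B'ubar Bu unfolding d_def B'_def
    by (simp add: matrix_vector_mult_diff_distrib matrix_vector_mult_diff_rdistrib elem_mat_mult_vec
        vec_eq_iff algebra_simps)
  have d_nonneg: "0 \<le> d$j" for j
    by (rule Z_matrix_hurwitz_nonneg[OF ZB hB]) (use \<open>0 \<le> ubar$k\<close> m_pos in \<open>simp add: Bd\<close>)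
  have "m * u$k \<le> m * ubar$k + (\<Sum>l\<in>UNIV. M$i$l * d$l)"
    using M_nonneg d_nonneg m_pos d_nonneg[of k]
    by (simp add: d_def sum_nonneg add_increasing2 distrib_left)
  also have "\<dots> = a i * d$i"
    using arg_cong[OF Bd, of "\<lambda>v. v$i"] by (simp add: B_def diag_mat_minus_mult_vec)
  finally have "m / a i * u$k \<le> d$i"
    using a_pos[of i] by (simp add: divide_le_eq mult.commute)
  then show ?thesis by (simp add: d_def u_def ubar_def B_def B'_def)
qed

end
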